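(* For every positive integer $k$, $R_{3,\dots,3}(W_3^{\otimes k})\leq(2+k)2^{k-1}$, where $W_3^{\otimes k}$ is viewed in $S^3\mathbb{C}^2\otimes\cdots\otimes S^3\mathbb{C}^2$ ($k$ factors).
   Context: Identify $S^3\mathbb{C}^2$ with binary cubic forms in a basis $\{x,y\}$; $W_3=x^2y$ (equivalently $y\otimes x\otimes x+x\otimes y\otimes x+x\otimes x\otimes y$). The partially symmetric rank $R_{d_1,\dots,d_k}(T)$ is the minimal $r$ such that $T=\sum_{i=1}^r v_{i,1}^{\otimes d_1}\otimes\cdots\otimes v_{i,k}^{\otimes d_k}$ with $v_{i,j}\in\mathbb{C}^2$. *)

theory Defs
  imports Complex_Main
begin

text \<open>Vectors in C^2 are functions bool => complex (False ~ coordinate of x, True ~ coordinate of y).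
A tensor in (C^2)^{d_0} x ... x (C^2)^{d_(k-1)} (tensor factors grouped into k blocks, block j
having d j factors) is given by its coordinates: a function from multi-indices
f :: nat => nat => bool (f j l = index of the l-th factor of block j) to complex numbers.
Only valid multi-indices (j < k, l < d j; all other values fixed to False) are relevant.\<close>

definition valid_idx :: "nat \<Rightarrow> (nat \<Rightarrow> nat) \<Rightarrow> (nat \<Rightarrow> nat \<Rightarrow> bool) \<Rightarrow> bool" where
  "valid_idx k d f \<longleftrightarrow> (\<forall>j l. (k \<le> j \<or> d j \<le> l) \<longrightarrow> \<not> f j l)"

definition ps_decomp :: "nat \<Rightarrow> (nat \<Rightarrow> nat) \<Rightarrow> ((nat \<Rightarrow> nat \<Rightarrow> bool) \<Rightarrow> complex) \<Rightarrow> nat \<Rightarrow> bool" where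
  "ps_decomp k d T r \<longleftrightarrow>
     (\<exists>v :: nat \<Rightarrow> nat \<Rightarrow> bool \<Rightarrow> complex.
        \<forall>f. valid_idx k d f \<longrightarrow>
          T f = (\<Sum>i<r. \<Prod>j<k. \<Prod>l<d j. v i j (f j l)))"

definition ps_rank :: "nat \<Rightarrow> (nat \<Rightarrow> nat) \<Rightarrow> ((nat \<Rightarrow> nat \<Rightarrow> bool) \<Rightarrow> complex) \<Rightarrow> nat" where
  "ps_rank k d T = (LEAST r. ps_decomp k d T r)"

text \<open>W_3 = y x x + x y x + x x y in (C^2)^{\<otimes>3}: coordinate 1 iff exactly one index is y (True).\<close>
definition W3_coord :: "(nat \<Rightarrow> bool) \<Rightarrow> complex" where
  "W3_coord g = (if card {l. l < 3 \<and> g l} = 1 then 1 else 0)"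

definition W3_pow :: "nat \<Rightarrow> (nat \<Rightarrow> nat \<Rightarrow> bool) \<Rightarrow> complex" where
  "W3_pow k f = (\<Prod>j<k. W3_coord (f j))"

end

theory Submission
  imports Defs "HOL-Library.FuncSet" "HOL-Computational_Algebra.Polynomial"
begin

text \<open>Write W = x^2 y and Y = y^3 for one factor. For e \<noteq> 0 the tensor
  W + e^2 Y = ((x + e y)^3 - (x - e y)^3) / (2e) has symmetric rank at most 2. Coordinatewise
  each factor of W^{\<otimes> k} sees (W, Y) as (1, 0), (0, 1) or (0, 0), and then
  W^{\<otimes> k} = \<Otimes>_j (W + Y) - \<Sum>_j Y_j \<otimes> \<Otimes>_{i \<noteq> j} (W + q_{ji} Y)
  as soon as \<Sum>_{j \<in> S} \<Prod>_{i \<in> S - {j}} q_{ji} = 1 for every nonempty S; the values at 0 of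
  Lagrange basis polynomials provide such weights, with q_{ji} \<noteq> 0. Expanding every factor
  W + c Y into two cubes gives 2^k + k 2^(k-1) = (2 + k) 2^(k-1) terms.\<close>

lemma complex_root_exists:
  fixes c :: complex
  assumes "n > 0"
  shows "\<exists>u. u ^ n = c"
proof -
  have "rcis (root n (cmod c)) (Arg c / n) ^ n = c"
    using assms by (simp add: DeMoivre2 rcis_cmod_Arg)
  then show ?thesis by blast
qed

lemma lagrange_basis_sum_at_node:
  fixes t :: "'b \<Rightarrow> 'a::field"
  assumes "finite S" "inj_on t S" "m \<in> S"
  shows "(\<Sum>j\<in>S. \<Prod>i\<in>S-{j}. (t m - t i) / (t j - t i)) = 1"
proof -
  have "(\<Prod>i\<in>S-{m}. (t m - t i) / (t m - t i)) = 1"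
    using assms by (intro prod.neutral) (auto dest: inj_onD)
  moreover have "(\<Sum>j\<in>S-{m}. \<Prod>i\<in>S-{j}. (t m - t i) / (t j - t i)) = 0"
    using assms by (intro sum.neutral ballI prod_zero) (auto intro!: bexI[of _ m])
  ultimately show ?thesis
    using assms by (simp add: sum.remove)
qed

text \<open>The sum of the Lagrange basis polynomials of distinct nodes has degree below the number
  of nodes and is 1 at every node, hence it is the constant 1.\<close>
lemma lagrange_basis_sum:
  fixes t :: "'b \<Rightarrow> 'a::field"
  assumes S: "finite S" "S \<noteq> {}" and inj: "inj_on t S"
  shows "(\<Sum>j\<in>S. \<Prod>i\<in>S-{j}. (x - t i) / (t j - t i)) = 1"
proof -
  define P where "P = (\<Sum>j\<in>S. smult (\<Prod>i\<in>S-{j}. 1 / (t j - t i)) (\<Prod>i\<in>S-{j}. [:- t i, 1:]))"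
  have poly_P: "poly P y = (\<Sum>j\<in>S. \<Prod>i\<in>S-{j}. (y - t i) / (t j - t i))" for y
    unfolding P_def poly_sum
    by (intro sum.cong refl) (simp add: poly_prod prod.distrib[symmetric])
  have "degree P \<le> card S - 1"
    unfolding P_def
  proof (intro degree_sum_le[OF S(1)] ballI order.trans[OF degree_smult_le])
    fix j assume "j \<in> S"
    have "degree (\<Prod>i\<in>S-{j}. [:- t i, 1:]) \<le> (\<Sum>i\<in>S-{j}. degree [:- t i, 1:])"
      using degree_prod_sum_le[of "S-{j}" "\<lambda>i. [:- t i, 1:]"] S by (simp add: o_def)
    then show "degree (\<Prod>i\<in>S-{j}. [:- t i, 1:]) \<le> card S - 1"
      using S \<open>j \<in> S\<close> by simp
  qed
  moreover have "card (t ` S) = card S" "card S > 0"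
    using S inj by (auto simp: card_image card_gt_0_iff)
  ultimately have "P = 1"
    using lagrange_basis_sum_at_node[OF S(1) inj]
    by (intro poly_eqI_degree[where A = "t ` S"]) (auto simp: poly_P)
  then show ?thesis
    using poly_P[of x] by simp
qed

text \<open>The values at 0 of the Lagrange basis polynomials for the nodes 1, 2, 3, ...\<close>
definition lagrange_weight :: "nat \<Rightarrow> nat \<Rightarrow> complex" where
  "lagrange_weight j i = of_nat (Suc i) / (of_nat (Suc i) - of_nat (Suc j))"

lemma lagrange_weight_sum:
  assumes "finite S" "S \<noteq> {}"
  shows "(\<Sum>j\<in>S. \<Prod>i\<in>S-{j}. lagrange_weight j i) = 1"
  using lagrange_basis_sum[OF assms, of "\<lambda>i. - of_nat (Suc i) :: complex" 0]
  by (simp add: lagrange_weight_def inj_on_def del: of_nat_Suc)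

lemma lagrange_weight_nonzero: "i \<noteq> j \<Longrightarrow> lagrange_weight j i \<noteq> 0"
  by (simp add: lagrange_weight_def del: of_nat_Suc)

lemma prod_eq_by_lagrange_weights:
  fixes w y :: "'b \<Rightarrow> 'a::comm_ring_1"
  assumes A: "finite A"
    and cases: "\<And>j. j \<in> A \<Longrightarrow> (w j = 1 \<and> y j = 0) \<or> (w j = 0 \<and> y j = 1) \<or> (w j = 0 \<and> y j = 0)"
    and weights: "\<And>S. S \<subseteq> A \<Longrightarrow> S \<noteq> {} \<Longrightarrow> (\<Sum>j\<in>S. \<Prod>i\<in>S-{j}. q j i) = 1"
  shows "(\<Prod>j\<in>A. w j) = (\<Prod>j\<in>A. w j + y j) - (\<Sum>j\<in>A. y j * (\<Prod>i\<in>A-{j}. w i + q j i * y i))"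
proof (cases "\<exists>j0\<in>A. w j0 = 0 \<and> y j0 = 0")
  case True
  then obtain j0 where j0: "j0 \<in> A" "w j0 = 0" "y j0 = 0" by blast
  have "(\<Prod>i\<in>A-{j}. w i + q j i * y i) = 0" if "j \<noteq> j0" for j
    using A j0 that by (intro prod_zero) (auto intro!: bexI[of _ j0])
  then have "(\<Sum>j\<in>A. y j * (\<Prod>i\<in>A-{j}. w i + q j i * y i)) = 0"
    using j0 by (intro sum.neutral) (metis mult_zero_left mult_zero_right)
  moreover have "(\<Prod>j\<in>A. w j) = 0" "(\<Prod>j\<in>A. w j + y j) = 0"
    using A j0 by (auto intro!: prod_zero bexI[of _ j0])
  ultimately show ?thesis by simp
next
  case False
  define S where "S = {j\<in>A. y j = 1}"
  have S: "S \<subseteq> A" "finite S"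
    using A by (auto simp: S_def finite_subset)
  have in_S: "w j = 0" "y j = 1" if "j \<in> S" for j
    using cases[of j] that by (auto simp: S_def)
  have not_in_S: "w j = 1" "y j = 0" if "j \<in> A" "j \<notin> S" for j
    using cases[of j] that False by (auto simp: S_def)
  have "(\<Prod>j\<in>A. w j + y j) = 1"
    using in_S not_in_S by (intro prod.neutral) (metis add_0 add.right_neutral)
  moreover have "(\<Prod>j\<in>A. w j) = (if S = {} then 1 else 0)"
  proof (cases "S = {}")
    case False
    then obtain j where "j \<in> S" by blast
    then show ?thesis
      using A S in_S False by (auto intro!: prod_zero)
  qed (use not_in_S in simp)
  moreover have "(\<Prod>i\<in>A-{j}. w i + q j i * y i) = (\<Prod>i\<in>S-{j}. q j i)" for j
    using A S in_S not_in_S by (intro prod.mono_neutral_cong_right) force+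
  then have "(\<Sum>j\<in>A. y j * (\<Prod>i\<in>A-{j}. w i + q j i * y i)) = (\<Sum>j\<in>S. \<Prod>i\<in>S-{j}. q j i)"
    using A S in_S not_in_S by (intro sum.mono_neutral_cong_right) auto
  ultimately show ?thesis
    using weights[OF S(1)] by auto
qed

lemma ps_decomp_finite_index:
  fixes v :: "'i \<Rightarrow> nat \<Rightarrow> bool \<Rightarrow> complex"
  assumes I: "finite I"
    and T: "\<And>f. valid_idx k d f \<Longrightarrow> T f = (\<Sum>x\<in>I. \<Prod>j<k. \<Prod>l<d j. v x j (f j l))"
  shows "ps_decomp k d T (card I)"
proof -
  obtain g where g: "bij_betw g {..<card I} I"
    using ex_bij_betw_nat_finite[OF I] by (auto simp: atLeast0LessThan)
  show ?thesis
    unfolding ps_decomp_def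
  proof (intro exI[of _ "\<lambda>i. v (g i)"] allI impI)
    fix f assume "valid_idx k d f"
    then show "T f = (\<Sum>i<card I. \<Prod>j<k. \<Prod>l<d j. v (g i) j (f j l))"
      using sum.reindex_bij_betw[OF g, of "\<lambda>x. \<Prod>j<k. \<Prod>l<d j. v x j (f j l)"] by (simp add: T)
  qed
qed

lemma ps_decomp_zero: "ps_decomp k d (\<lambda>_. 0) 0"
  by (simp add: ps_decomp_def)

lemma ps_decomp_add:
  assumes "ps_decomp k d T r" "ps_decomp k d U s"
  shows "ps_decomp k d (\<lambda>f. T f + U f) (r + s)"
proof -
  obtain v w where
    v: "\<And>f. valid_idx k d f \<Longrightarrow> T f = (\<Sum>i<r. \<Prod>j<k. \<Prod>l<d j. v i j (f j l))" and
    w: "\<And>f. valid_idx k d f \<Longrightarrow> U f = (\<Sum>i<s. \<Prod>j<k. \<Prod>l<d j. w i j (f j l))"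
    using assms unfolding ps_decomp_def by blast
  have "ps_decomp k d (\<lambda>f. T f + U f) (card ({..<r} <+> {..<s}))"
    by (rule ps_decomp_finite_index[where v = "case_sum v w"]) (simp_all add: sum.Plus v w o_def)
  then show ?thesis
    by (simp add: card_Plus)
qed

lemma ps_decomp_sum:
  assumes "finite A" "\<And>x. x \<in> A \<Longrightarrow> ps_decomp k d (T x) (r x)"
  shows "ps_decomp k d (\<lambda>f. \<Sum>x\<in>A. T x f) (\<Sum>x\<in>A. r x)"
  using assms by (induction A rule: finite_induct) (simp_all add: ps_decomp_zero ps_decomp_add)

definition sym_decomp :: "nat \<Rightarrow> ((nat \<Rightarrow> bool) \<Rightarrow> complex) \<Rightarrow> nat \<Rightarrow> bool" where
  "sym_decomp n T r \<longleftrightarrow> (\<exists>v :: nat \<Rightarrow> bool \<Rightarrow> complex. \<forall>g. T g = (\<Sum>i<r. \<Prod>l<n. v i (g l)))"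

lemma ps_decomp_tensor:
  assumes "\<And>j. j < k \<Longrightarrow> sym_decomp (d j) (T j) (r j)"
  shows "ps_decomp k d (\<lambda>f. \<Prod>j<k. T j (f j)) (\<Prod>j<k. r j)"
proof -
  obtain v where v: "\<And>j g. j < k \<Longrightarrow> T j g = (\<Sum>i<r j. \<Prod>l<d j. v j i (g l))"
    using assms unfolding sym_decomp_def by metis
  have "(\<Prod>j<k. T j (f j)) = (\<Sum>s\<in>PiE {..<k} (\<lambda>j. {..<r j}). \<Prod>j<k. \<Prod>l<d j. v j (s j) (f j l))" for f
    by (simp add: v prod_sum_PiE)
  then have "ps_decomp k d (\<lambda>f. \<Prod>j<k. T j (f j)) (card (PiE {..<k} (\<lambda>j. {..<r j})))"
    by (intro ps_decomp_finite_index) (simp_all add: finite_PiE)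
  then show ?thesis
    by (simp add: card_PiE)
qed

lemma prod_lessThan_3: "(\<Prod>l<3. h l) = h 0 * h 1 * (h (2::nat) :: 'a::comm_monoid_mult)"
  by (simp add: numeral_3_eq_3 numeral_2_eq_2 mult_ac)

lemma card_lessThan_3_true: "card {l. l < 3 \<and> g l} = of_bool (g 0) + of_bool (g 1) + of_bool (g (2::nat))"
proof -
  have "card {l. l < 3 \<and> g l} = (\<Sum>l<3. of_bool (g l))"
    by (simp add: lessThan_def Collect_conj_eq)
  then show ?thesis
    by (simp add: numeral_3_eq_3 numeral_2_eq_2)
qed

definition Y3_coord :: "(nat \<Rightarrow> bool) \<Rightarrow> complex" where
  "Y3_coord g = (\<Prod>l<3. of_bool (g l))"

lemma W3_Y3_coord_cases:
  "(W3_coord g = 1 \<and> Y3_coord g = 0) \<or> (W3_coord g = 0 \<and> Y3_coord g = 1) \<or> (W3_coord g = 0 \<and> Y3_coord g = 0)"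
  by (cases "g 0"; cases "g 1"; cases "g 2")
    (simp_all add: W3_coord_def Y3_coord_def card_lessThan_3_true prod_lessThan_3)

lemma sym_decomp_neg_Y3: "sym_decomp 3 (\<lambda>g. - Y3_coord g) 1"
  unfolding sym_decomp_def Y3_coord_def
  by (rule exI[of _ "\<lambda>_ b. - of_bool b"]) (simp add: prod_lessThan_3)

text \<open>With u^3 = 1/(2e) and e^2 = q: (u x + u e y)^3 + (-u x + u e y)^3 = W + q Y,
  since the terms with an even number of factors y cancel.\<close>
lemma sym_decomp_W3_add_Y3:
  assumes "q \<noteq> 0"
  shows "sym_decomp 3 (\<lambda>g. W3_coord g + q * Y3_coord g) 2"
proof -
  define e where "e = csqrt q"
  have e: "e \<noteq> 0" "e * e = q"
    using assms by (simp_all add: e_def power2_eq_square[symmetric])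
  obtain u where u: "u ^ 3 = 1 / (2 * e)"
    using complex_root_exists[of 3 "1 / (2 * e)"] by auto
  then have u3: "u * u * u = 1 / (2 * e)"
    by (simp add: power3_eq_cube)
  define v where "v i b = (if b then u * e else if i = 0 then u else - u)" for i :: nat and b
  have "W3_coord g + q * Y3_coord g = (\<Sum>i<2. \<Prod>l<3. v i (g l))" for g
    using e u3 by (cases "g 0"; cases "g 1"; cases "g 2")
      (simp_all add: W3_coord_def Y3_coord_def card_lessThan_3_true prod_lessThan_3 v_def
        numeral_2_eq_2 field_simps)
  then show ?thesis
    unfolding sym_decomp_def by blast
qed

lemma W3_pow_expansion:
  "W3_pow k f = (\<Prod>j<k. W3_coord (f j) + Y3_coord (f j))
     + (\<Sum>j<k. \<Prod>i<k. if i = j then - Y3_coord (f i)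
                           else W3_coord (f i) + lagrange_weight j i * Y3_coord (f i))"
proof -
  have "(\<Prod>i<k. if i = j then - Y3_coord (f i) else W3_coord (f i) + lagrange_weight j i * Y3_coord (f i))
      = - (Y3_coord (f j) * (\<Prod>i\<in>{..<k}-{j}. W3_coord (f i) + lagrange_weight j i * Y3_coord (f i)))"
    if "j < k" for j
  proof -
    have "(\<Prod>i\<in>{..<k}-{j}. if i = j then - Y3_coord (f i) else W3_coord (f i) + lagrange_weight j i * Y3_coord (f i))
        = (\<Prod>i\<in>{..<k}-{j}. W3_coord (f i) + lagrange_weight j i * Y3_coord (f i))"
      by (intro prod.cong) auto
    then show ?thesis
      using that by (simp add: prod.remove)
  qed
  moreover have "(\<Prod>j<k. W3_coord (f j)) = (\<Prod>j<k. W3_coord (f j) + Y3_coord (f j))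
      - (\<Sum>j<k. Y3_coord (f j) * (\<Prod>i\<in>{..<k}-{j}. W3_coord (f i) + lagrange_weight j i * Y3_coord (f i)))"
    by (rule prod_eq_by_lagrange_weights)
      (simp_all add: W3_Y3_coord_cases lagrange_weight_sum rev_finite_subset[OF finite_lessThan])
  ultimately show ?thesis
    by (simp add: W3_pow_def sum_negf)
qed

lemma ps_decomp_W3_correction:
  assumes "j < k"
  shows "ps_decomp k (\<lambda>_. 3)
    (\<lambda>f. \<Prod>i<k. if i = j then - Y3_coord (f i) else W3_coord (f i) + lagrange_weight j i * Y3_coord (f i))
    (2 ^ (k - 1))"
proof -
  have "(\<Prod>i<k. if i = j then 1 else 2 :: nat) = (\<Prod>i\<in>{..<k}-{j}. 2)"
    using assms by (subst prod.remove[of _ j]) (auto intro!: prod.cong)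
  then have count: "(\<Prod>i<k. if i = j then 1 else 2 :: nat) = 2 ^ (k - 1)"
    using assms by simp
  have "sym_decomp 3 (\<lambda>g. if i = j then - Y3_coord g else W3_coord g + lagrange_weight j i * Y3_coord g)
      (if i = j then 1 else 2)" for i
    using sym_decomp_neg_Y3 sym_decomp_W3_add_Y3 lagrange_weight_nonzero by (cases "i = j") auto
  then show ?thesis
    using ps_decomp_tensor[of k "\<lambda>_. 3"
        "\<lambda>i g. if i = j then - Y3_coord g else W3_coord g + lagrange_weight j i * Y3_coord g"
        "\<lambda>i. if i = j then 1 else 2"]
    by (simp add: count)
qed

theorem theorem3p3:
  fixes k :: nat
  assumes "1 \<le> k"
  shows "ps_rank k (\<lambda>_. 3) (W3_pow k) \<le> (2 + k) * 2 ^ (k - 1)"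
proof -
  have main: "ps_decomp k (\<lambda>_. 3) (\<lambda>f. \<Prod>j<k. W3_coord (f j) + Y3_coord (f j)) (2 ^ k)"
    using ps_decomp_tensor[of k "\<lambda>_. 3" "\<lambda>_ g. W3_coord g + Y3_coord g" "\<lambda>_. 2"]
      sym_decomp_W3_add_Y3[of 1] by simp
  have "ps_decomp k (\<lambda>_. 3) (W3_pow k) (2 ^ k + (\<Sum>j<k. 2 ^ (k - 1)))"
    unfolding W3_pow_expansion[abs_def]
    by (intro ps_decomp_add[OF main] ps_decomp_sum finite_lessThan ps_decomp_W3_correction) simp
  moreover have "2 ^ k + (\<Sum>j<k. 2 ^ (k - 1)) = (2 + k) * 2 ^ (k - 1 :: nat)"
    using assms by (cases k) auto
  ultimately show ?thesis
    unfolding ps_rank_def by (metis Least_le)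
qed

end
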